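(* Let $n,k$ be integers with $k\leqslant n<2k-3$. Then there exists $M$ such that for every integer $m\geqslant M$ we have $\alpha(m,n,k)=h(m,n,k)$, and every $(m,n,k)$-intersecting family of maximum cardinality equals $\mathcal{H}_t^{m,n,k}$ for some $t\in[n]$.
   Context: For positive integers $a\leqslant b$, $[a,b]=\{a,a+1,\dots,b\}$ and $[a]=[1,a]$; $\binom{X}{k}$ denotes the family of all $k$-subsets of a set $X$. A family of sets is intersecting if no two of its members are disjoint. For integers $0<k\leqslant n<2k<m$, an $(m,n,k)$-intersecting family is an intersecting family $\mathcal{F}$ with $\binom{[n]}{k}\subseteq\mathcal{F}\subseteq\binom{[m]}{k}$, and $\alpha(m,n,k)$ is the maximum cardinality of an $(m,n,k)$-intersecting family. Define $h(m,n,k)=\binom{n}{k}+\sum_{i=1}^{2k-n-1}\binom{n-1}{k-i-1}\binom{m-n}{i}$. For $t\in[n]$, define \[ \mathcal{H}_t^{m,n,k}=\binom{[n]}{k}\cup\bigcup_{i=1}^{2k-n-1}\left\{A\cup B\cup\{t\}\ \middle|\ A\in\binom{[n]\setminus\{t\}}{k-i-1},\ B\in\binom{[n+1,m]}{i}\right\}, \] an $(m,n,k)$-intersecting family of cardinality $h(m,n,k)$. *)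

theory Defs
  imports Main
begin

definition intersecting :: "nat set set \<Rightarrow> bool" where
  "intersecting F \<longleftrightarrow> (\<forall>A\<in>F. \<forall>B\<in>F. A \<inter> B \<noteq> {})"

definition ksubsets :: "nat set \<Rightarrow> nat \<Rightarrow> nat set set" where
  "ksubsets X k = {A. A \<subseteq> X \<and> card A = k}"

definition mnk_intersecting :: "nat \<Rightarrow> nat \<Rightarrow> nat \<Rightarrow> nat set set \<Rightarrow> bool" where
  "mnk_intersecting m n k F \<longleftrightarrow>
     intersecting F \<and> ksubsets {1..n} k \<subseteq> F \<and> F \<subseteq> ksubsets {1..m} k"

definition alpha :: "nat \<Rightarrow> nat \<Rightarrow> nat \<Rightarrow> nat" where
  "alpha m n k = Max (card ` {F. mnk_intersecting m n k F})"

definition h :: "nat \<Rightarrow> nat \<Rightarrow> nat \<Rightarrow> nat" where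
  "h m n k = (n choose k) +
     (\<Sum>i=1..2*k-n-1. ((n-1) choose (k-i-1)) * ((m-n) choose i))"

definition H :: "nat \<Rightarrow> nat \<Rightarrow> nat \<Rightarrow> nat \<Rightarrow> nat set set" where
  "H m n k t = ksubsets {1..n} k \<union>
     (\<Union>i\<in>{1..2*k-n-1}. {A \<union> B \<union> {t} | A B.
        A \<in> ksubsets ({1..n} - {t}) (k-i-1) \<and> B \<in> ksubsets {n+1..m} i})"

end

theory Submission
  imports Defs "HOL-Combinatorics.Multiset_Permutations"
begin

text \<open>
  A member \<open>A\<close> of an \<open>(m,n,k)\<close>-intersecting family \<open>F\<close> meets \<open>[n+1,m]\<close> in at most
  \<open>s = 2k-n-1\<close> points, for otherwise \<open>[n] - A\<close> contains a \<open>k\<close>-set disjoint from \<open>A\<close>.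
  Members meeting \<open>[n+1,m]\<close> in fewer than \<open>s\<close> points number \<open>O(m^(s-1))\<close>, while
  \<open>h(m,n,k)\<close> grows like \<open>C(n-1,n-k) C(m-n,s)\<close>. A member at the top level \<open>s\<close> has a trace
  \<open>A \<inter> [n]\<close> of size \<open>n-k+1\<close>; call a trace heavy if it carries more members than the
  \<open>s\<close> new points of a single member can pierce. Members over two disjoint traces must meet
  in new points, so the heavy traces form an intersecting family of \<open>(n-k+1)\<close>-subsets of
  \<open>[n]\<close>, where \<open>2(n-k+1) < n\<close>. By the Erdos-Ko-Rado theorem there are at most
  \<open>C(n-1,n-k)\<close> of them. If there are fewer, counting gives \<open>|F| < h(m,n,k)\<close> for large
  \<open>m\<close>. If there are exactly that many, the uniqueness part of Erdos-Ko-Rado (proved here by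
  Katona's circle method) makes them the star of some \<open>t \<in> [n]\<close>; then \<open>t\<close> lies in every
  member meeting \<open>[n+1,m]\<close>, i.e. \<open>F \<subseteq> H_t\<close>.
\<close>

section \<open>Cyclic distances\<close>

definition cdist :: "nat \<Rightarrow> nat \<Rightarrow> nat \<Rightarrow> nat" where
  "cdist n a b = (if a \<le> b then b - a else n + b - a)"

lemma cdist_inj_left:
  "a < n \<Longrightarrow> b < n \<Longrightarrow> c < n \<Longrightarrow> cdist n a c = cdist n b c \<Longrightarrow> a = b"
  by (auto simp: cdist_def split: if_splits)

text \<open>Arcs of length \<open>r\<close> starting at any two positions of \<open>J\<close> overlap.\<close>
definition cyclically_close :: "nat \<Rightarrow> nat \<Rightarrow> nat set \<Rightarrow> bool" where
  "cyclically_close n r J \<longleftrightarrow> (\<forall>a\<in>J. \<forall>b\<in>J. cdist n a b < r \<or> cdist n b a < r)"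

text \<open>For a position \<open>i\<close> close to \<open>j\<close>, its offset from \<open>j\<close> folded into \<open>{..<r}\<close>:
  positions behind \<open>j\<close> land in the top part of the range.\<close>
definition folded_offset :: "nat \<Rightarrow> nat \<Rightarrow> nat \<Rightarrow> nat \<Rightarrow> nat" where
  "folded_offset n r j i = (if cdist n j i < r then cdist n j i else cdist n j i + r - n)"

lemma folded_offset_less:
  assumes "J \<subseteq> {..<n}" "cyclically_close n r J" "j \<in> J" "i \<in> J" "2*r \<le> n"
  shows "folded_offset n r j i < r"
proof -
  have "j < n" "i < n" using assms by auto
  have "cdist n j i < r \<or> cdist n i j < r" using assms unfolding cyclically_close_def by blast
  then show ?thesis using \<open>j < n\<close> \<open>i < n\<close> assms(5) by (auto simp: folded_offset_def cdist_def)
qed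

lemma inj_on_folded_offset:
  assumes "J \<subseteq> {..<n}" "cyclically_close n r J" "j \<in> J" "2*r \<le> n"
  shows "inj_on (folded_offset n r j) J"
proof
  fix a b assume ab: "a \<in> J" "b \<in> J" "folded_offset n r j a = folded_offset n r j b"
  have lt: "a < n" "b < n" "j < n" using assms ab by auto
  have "cdist n a b < r \<or> cdist n b a < r" "cdist n j a < r \<or> cdist n a j < r"
    "cdist n j b < r \<or> cdist n b j < r"
    using assms ab unfolding cyclically_close_def by blast+
  then show "a = b" using ab(3) lt assms(4)
    by (auto simp: folded_offset_def cdist_def split: if_splits)
qed

lemma card_cyclically_close_le:
  assumes "J \<subseteq> {..<n}" "cyclically_close n r J" "2*r \<le> n"
  shows "card J \<le> r"
proof (cases "J = {}")
  case False
  then obtain j where j: "j \<in> J" by blast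
  have "card J = card (folded_offset n r j ` J)"
    using card_image inj_on_folded_offset[OF assms(1,2) j assms(3)] by metis
  also have "\<dots> \<le> card {..<r}"
    using folded_offset_less[OF assms(1,2) j _ assms(3)] by (intro card_mono) auto
  finally show ?thesis by simp
qed simp

lemma exists_without_successor:
  assumes "J \<subseteq> {..<n}" "J \<noteq> {}" "J \<noteq> {..<n}"
  obtains j where "j \<in> J" "\<not> (\<exists>i\<in>J. cdist n j i = 1)"
proof (cases "\<exists>i\<in>J. i + 1 < n \<and> i + 1 \<notin> J")
  case True
  then obtain i where i: "i \<in> J" "i + 1 < n" "i + 1 \<notin> J" by blast
  have "\<not> (\<exists>x\<in>J. cdist n i x = 1)"
  proof
    assume "\<exists>x\<in>J. cdist n i x = 1"
    then obtain x where "x \<in> J" "cdist n i x = 1" by blast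
    moreover have "x < n" using \<open>x \<in> J\<close> assms(1) by auto
    ultimately have "x = i + 1" using i by (auto simp: cdist_def split: if_splits)
    then show False using \<open>x \<in> J\<close> i by simp
  qed
  then show ?thesis using that i by blast
next
  case False
  then have closed: "i \<in> J \<Longrightarrow> i + d < n \<Longrightarrow> i + d \<in> J" for i d
    by (induction d) auto
  obtain i0 where i0: "i0 \<in> J" using assms by blast
  have "i0 < n" using i0 assms by auto
  then have last: "n - 1 \<in> J" using closed[OF i0, of "n - 1 - i0"] by simp
  have "0 \<notin> J"
  proof
    assume "0 \<in> J"
    then have "{..<n} \<subseteq> J" using closed[of 0] by auto
    then show False using assms by auto
  qed
  have "\<not> (\<exists>x\<in>J. cdist n (n - 1) x = 1)"
  proof
    assume "\<exists>x\<in>J. cdist n (n - 1) x = 1"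
    then obtain x where "x \<in> J" "cdist n (n - 1) x = 1" by blast
    moreover have "x < n" using \<open>x \<in> J\<close> assms(1) by auto
    ultimately show False using \<open>0 \<notin> J\<close> by (auto simp: cdist_def split: if_splits)
  qed
  then show ?thesis using that last by blast
qed

lemma cdist_of_folded_offset:
  assumes "i < n" "j < n" "folded_offset n r j i = l" "0 < l"
  shows "cdist n j i = l \<or> cdist n i j = r - l"
  using assms by (auto simp: folded_offset_def cdist_def split: if_splits)

lemma folded_offset_image:
  assumes J: "J \<subseteq> {..<n}" and close: "cyclically_close n r J" and nr: "2*r \<le> n"
    and j: "j \<in> J" and card: "card J = r"
  shows "folded_offset n r j ` J = {..<r}"
proof (rule card_subset_eq)
  show "folded_offset n r j ` J \<subseteq> {..<r}" using folded_offset_less[OF J close j _ nr] by auto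
  show "card (folded_offset n r j ` J) = card {..<r}"
    using card_image inj_on_folded_offset[OF J close j nr] card by auto
qed simp

text \<open>If \<open>j\<close> has no successor in \<open>J\<close>, then the offsets \<open>1, \<dots>, r - 1\<close> of \<open>J\<close> are all
  taken by positions behind \<open>j\<close>: a position at forward offset \<open>l + 1\<close> would be too far from
  the one at backward offset \<open>r - l\<close>.\<close>
lemma no_forward_offset:
  assumes J: "J \<subseteq> {..<n}" and close: "cyclically_close n r J" and nr: "2*r + 1 \<le> n"
    and j: "j \<in> J" "\<not> (\<exists>i\<in>J. cdist n j i = 1)"
    and image: "folded_offset n r j ` J = {..<r}"
  shows "0 < l \<Longrightarrow> l < r \<Longrightarrow> \<not> (\<exists>i\<in>J. cdist n j i = l)"
proof (induction l)
  case (Suc l)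
  show ?case
  proof (cases "l = 0")
    case False
    have "l \<in> folded_offset n r j ` J" using image Suc.prems by auto
    then obtain i1 where i1: "i1 \<in> J" "folded_offset n r j i1 = l" by blast
    have "cdist n i1 j = r - l"
      using cdist_of_folded_offset[OF _ _ i1(2)] Suc False i1 j J by auto
    show ?thesis
    proof
      assume "\<exists>i\<in>J. cdist n j i = Suc l"
      then obtain i2 where i2: "i2 \<in> J" "cdist n j i2 = Suc l" by blast
      have "i1 < n" "i2 < n" "j < n" using i1 i2 j J by auto
      moreover have "cdist n i1 i2 < r \<or> cdist n i2 i1 < r"
        using close i1 i2 unfolding cyclically_close_def by blast
      ultimately show False using \<open>cdist n i1 j = r - l\<close> i2 nr Suc.prems False
        by (auto simp: cdist_def split: if_splits)
    qed
  qed (use j in simp)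
qed simp

lemma cyclically_close_card_eq:
  assumes J: "J \<subseteq> {..<n}" and close: "cyclically_close n r J" and nr: "2*r + 1 \<le> n"
    and r: "1 \<le> r" and card: "card J = r"
  shows "\<exists>p<n. J = {i. i < n \<and> cdist n i p < r}"
proof -
  have "J \<noteq> {}" "J \<noteq> {..<n}" using card r nr by auto
  then obtain j where j: "j \<in> J" "\<not> (\<exists>i\<in>J. cdist n j i = 1)"
    using exists_without_successor[OF J] by blast
  have jn: "j < n" using j J by auto
  have image: "folded_offset n r j ` J = {..<r}"
    using folded_offset_image[OF J close _ j(1) card] nr by simp
  note no_fwd = no_forward_offset[OF J close nr j image]
  have "J = {i. i < n \<and> cdist n i j < r}"
  proof (intro equalityI subsetI)
    fix i assume i: "i \<in> J"
    then have "i < n" using J by auto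
    moreover have "cdist n i j < r"
    proof (cases "i = j")
      case False
      then have "cdist n j i \<noteq> 0" using \<open>i < n\<close> jn by (auto simp: cdist_def)
      moreover have "cdist n j i < r \<or> cdist n i j < r"
        using close i j unfolding cyclically_close_def by blast
      ultimately show ?thesis using no_fwd[of "cdist n j i"] i by auto
    qed (use r in \<open>simp add: cdist_def\<close>)
    ultimately show "i \<in> {i. i < n \<and> cdist n i j < r}" by simp
  next
    fix i assume "i \<in> {i. i < n \<and> cdist n i j < r}"
    then have i: "i < n" "cdist n i j < r" by auto
    show "i \<in> J"
    proof (cases "cdist n i j = 0")
      case True
      then show ?thesis using i jn j by (auto simp: cdist_def split: if_splits)
    next
      case False
      then have "r - cdist n i j \<in> folded_offset n r j ` J" using image i by auto
      then obtain i' where i': "i' \<in> J" "folded_offset n r j i' = r - cdist n i j" by (metis imageE)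
      have "cdist n i' j = cdist n i j"
        using cdist_of_folded_offset[OF _ jn i'(2)]
          no_fwd[of "r - cdist n i j"] i' i False J by force
      then show ?thesis using cdist_inj_left[of i' n i j] i' i jn J by auto
    qed
  qed
  then show ?thesis using jn by blast
qed

section \<open>Katona's circle method and the Erdos-Ko-Rado theorem\<close>

definition arc :: "nat \<Rightarrow> 'a list \<Rightarrow> nat \<Rightarrow> 'a set" where
  "arc r xs i = set (take r (rotate i xs))"

lemma arc_conv_cdist:
  assumes "length xs = n" "i < n" "r \<le> n"
  shows "arc r xs i = (\<lambda>q. xs ! q) ` {q. q < n \<and> cdist n i q < r}"
proof -
  have "arc r xs i = (\<lambda>l. rotate i xs ! l) ` {..<r}"
    using assms by (force simp: arc_def set_conv_nth min_def)
  also have "\<dots> = (\<lambda>q. xs ! q) ` ((\<lambda>l. (i + l) mod n) ` {..<r})"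
    using assms by (auto simp: nth_rotate image_image)
  also have "(\<lambda>l. (i + l) mod n) ` {..<r} = {q. q < n \<and> cdist n i q < r}"
  proof (intro equalityI subsetI)
    fix q assume "q \<in> (\<lambda>l. (i + l) mod n) ` {..<r}"
    then obtain l where "l < r" "q = (i + l) mod n" by blast
    then show "q \<in> {q. q < n \<and> cdist n i q < r}"
      using assms by (auto simp: cdist_def mod_if)
  next
    fix q assume q: "q \<in> {q. q < n \<and> cdist n i q < r}"
    then have "(i + cdist n i q) mod n = q" using assms by (auto simp: cdist_def mod_if)
    then show "q \<in> (\<lambda>l. (i + l) mod n) ` {..<r}" using q by force
  qed
  finally show ?thesis .
qed

lemma arcs_intersect_imp_close:
  assumes "length xs = n" "distinct xs" "i < n" "j < n" "r \<le> n"
    and "arc r xs i \<inter> arc r xs j \<noteq> {}"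
  shows "cdist n i j < r \<or> cdist n j i < r"
proof -
  obtain q where "q < n" "cdist n i q < r" "cdist n j q < r"
    using assms by (auto simp: arc_conv_cdist nth_eq_iff_index_eq)
  then show ?thesis using assms(3,4) by (auto simp: cdist_def split: if_splits)
qed

lemma cyclically_close_arcs_in:
  assumes "xs \<in> permutations_of_set X" "card X = n" "2*r \<le> n" "intersecting T"
  shows "cyclically_close n r {i\<in>{..<n}. arc r xs i \<in> T}"
  unfolding cyclically_close_def
proof (intro ballI)
  fix a b assume "a \<in> {i\<in>{..<n}. arc r xs i \<in> T}" "b \<in> {i\<in>{..<n}. arc r xs i \<in> T}"
  then have ab: "a < n" "b < n" "arc r xs a \<inter> arc r xs b \<noteq> {}"
    using assms(4) unfolding intersecting_def by auto
  have "length xs = n" "distinct xs"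
    using assms(1,2) length_finite_permutations_of_set by (auto simp: permutations_of_set_def)
  then show "cdist n a b < r \<or> cdist n b a < r"
    using arcs_intersect_imp_close[OF _ _ ab(1,2) _ ab(3)] assms(3) by auto
qed

lemma bij_betw_rotate_permutations_of_set:
  "bij_betw (rotate i) (permutations_of_set X) (permutations_of_set X)"
proof -
  have inj: "inj_on (rotate i) (permutations_of_set X)"
    by (metis inj_rotate1 inj_fn inj_on_subset rotate_def subset_UNIV)
  have "rotate i ` permutations_of_set X = permutations_of_set X"
    by (rule card_subset_eq[OF finite_permutations_of_set])
      (use card_image[OF inj] in \<open>auto simp: permutations_of_set_def\<close>)
  then show ?thesis using inj by (simp add: bij_betw_def)
qed

lemma finite_ksubsets: "finite X \<Longrightarrow> finite (ksubsets X r)"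
  unfolding ksubsets_def by (rule finite_subset[of _ "Pow X"]) auto

lemma card_permutations_with_prefix:
  assumes fin: "finite X" and S: "S \<subseteq> X" "card S = r"
  shows "card {ys \<in> permutations_of_set X. set (take r ys) = S} = fact r * fact (card X - r)"
proof -
  have finS: "finite S" using fin S finite_subset by blast
  let ?P = "permutations_of_set S \<times> permutations_of_set (X - S)"
  let ?f = "\<lambda>(a, b). (a::'a list) @ b"
  have eq: "{ys \<in> permutations_of_set X. set (take r ys) = S} = ?f ` ?P"
  proof (intro equalityI subsetI)
    fix ys assume "ys \<in> {ys \<in> permutations_of_set X. set (take r ys) = S}"
    then have ys: "set ys = X" "distinct ys" "set (take r ys) = S"
      by (auto simp: permutations_of_set_def)
    have "distinct (take r ys @ drop r ys)" using ys by simp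
    then have "set (drop r ys) = X - S"
      using ys by (metis Diff_cancel Un_Diff distinct_append set_append append_take_drop_id
          Int_Diff Diff_triv Un_Diff_Int inf_commute)
    then show "ys \<in> ?f ` ?P"
      using ys by (intro image_eqI[of ys _ "(take r ys, drop r ys)"])
        (auto simp: permutations_of_set_def distinct_take distinct_drop)
  next
    fix ys assume "ys \<in> ?f ` ?P"
    then obtain a b where ab: "ys = a @ b" "set a = S" "distinct a" "set b = X - S" "distinct b"
      by (auto simp: permutations_of_set_def)
    have "length a = r" using ab S distinct_card by metis
    then show "ys \<in> {ys \<in> permutations_of_set X. set (take r ys) = S}"
      using ab S by (auto simp: permutations_of_set_def)
  qed
  have "inj_on ?f ?P"
  proof (rule inj_onI)
    fix x y assume xy: "x \<in> ?P" "y \<in> ?P" "?f x = ?f y"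
    obtain a b a' b' where "x = (a, b)" "y = (a', b')" by fastforce
    with xy show "x = y"
      using length_finite_permutations_of_set
        by (metis append_eq_append_conv mem_Sigma_iff case_prod_conv)
  qed
  moreover have "card (X - S) = card X - r" using S fin by (simp add: card_Diff_subset finS)
  ultimately show ?thesis unfolding eq using fin finS S
    by (simp add: card_image card_cartesian_product)
qed

text \<open>Double counting: an \<open>r\<close>-set occurs as the arc at a given position in exactly
  \<open>r! (n - r)!\<close> orderings.\<close>
lemma sum_card_arcs_in:
  assumes fin: "finite X" and n: "card X = n" and rn: "r \<le> n" and T: "T \<subseteq> ksubsets X r"
  shows "(\<Sum>xs\<in>permutations_of_set X. card {i\<in>{..<n}. arc r xs i \<in> T})
         = card T * (n * (fact r * fact (n - r)))"
proof -
  let ?P = "permutations_of_set X"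
  let ?ind = "\<lambda>ys. if set (take r ys) \<in> T then 1 else (0::nat)"
  have finT: "finite T" using T fin finite_ksubsets finite_subset by blast
  have "(\<Sum>xs\<in>?P. card {i\<in>{..<n}. arc r xs i \<in> T})
      = (\<Sum>xs\<in>?P. \<Sum>i\<in>{..<n}. ?ind (rotate i xs))"
    by (simp add: arc_def sum.If_cases Int_def)
  also have "\<dots> = (\<Sum>i\<in>{..<n}. \<Sum>xs\<in>?P. ?ind (rotate i xs))"
    by (rule sum.swap)
  also have "\<dots> = (\<Sum>i\<in>{..<n}. \<Sum>ys\<in>?P. ?ind ys)"
    by (rule sum.cong[OF refl], rule sum.reindex_bij_betw[OF bij_betw_rotate_permutations_of_set])
  also have "(\<Sum>ys\<in>?P. ?ind ys) = card (\<Union>S\<in>T. {ys\<in>?P. set (take r ys) = S})"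
    by (simp add: sum.If_cases Int_def) (rule arg_cong[where f=card], auto)
  also have "\<dots> = (\<Sum>S\<in>T. card {ys\<in>?P. set (take r ys) = S})"
    by (rule card_UN_disjoint) (use finT in auto)
  also have "\<dots> = card T * (fact r * fact (n - r))"
    using T card_permutations_with_prefix[OF fin] n by (simp add: ksubsets_def subset_iff)
  finally show ?thesis by simp
qed

lemma binomial_times_arc_count:
  assumes "1 \<le> r" "r \<le> n"
  shows "((n - 1) choose (r - 1)) * (n * (fact r * fact (n - r))) = r * fact n"
proof -
  have "fact (r - 1) * fact (n - r) * ((n - 1) choose (r - 1)) = fact (n - 1)"
    using binomial_fact_lemma[of "r - 1" "n - 1"] assms by simp
  moreover have "fact r = r * fact (r - 1)" "fact n = n * fact (n - 1)"
    using fact_reduce[of r, where 'a=nat] fact_reduce[of n, where 'a=nat] assms by simp_all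
  ultimately show ?thesis by (simp only: ac_simps)
qed

lemma card_arcs_in_le:
  assumes "xs \<in> permutations_of_set X" "card X = n" "2*r \<le> n" "intersecting T"
  shows "card {i\<in>{..<n}. arc r xs i \<in> T} \<le> r"
  using card_cyclically_close_le[OF _ cyclically_close_arcs_in[OF assms]] assms(3) by auto

theorem erdos_ko_rado:
  assumes fin: "finite X" and n: "card X = n" and r: "1 \<le> r" "2*r \<le> n"
    and T: "T \<subseteq> ksubsets X r" and I: "intersecting T"
  shows "card T \<le> (n - 1) choose (r - 1)"
proof -
  define K where "K = n * (fact r * fact (n - r))"
  have "card T * K = (\<Sum>xs\<in>permutations_of_set X. card {i\<in>{..<n}. arc r xs i \<in> T})"
    using sum_card_arcs_in[OF fin n _ T] r unfolding K_def by simp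
  also have "\<dots> \<le> card (permutations_of_set X) * r"
    by (rule sum_bounded_above[where 'a=nat, simplified])
      (use card_arcs_in_le[OF _ n r(2) I] in simp)
  also have "\<dots> = ((n - 1) choose (r - 1)) * K"
    using binomial_times_arc_count[of r n] r fin n unfolding K_def by simp
  finally show ?thesis using r unfolding K_def by simp
qed

text \<open>The equality case of Katona's circle argument: on every cyclic ordering of \<open>X\<close>, the
  arcs of length \<open>r\<close> that belong to \<open>T\<close> are exactly those containing a common position \<open>p\<close>.\<close>
definition pinned_on_cycles :: "'a set \<Rightarrow> nat \<Rightarrow> 'a set set \<Rightarrow> bool" where
  "pinned_on_cycles X r T \<longleftrightarrow> (\<forall>xs\<in>permutations_of_set X. \<exists>p<card X. \<forall>i<card X.
     arc r xs i \<in> T \<longleftrightarrow> cdist (card X) i p < r)"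

lemma erdos_ko_rado_equality_pinned:
  assumes fin: "finite X" and n: "card X = n" and r: "1 \<le> r" "2*r + 1 \<le> n"
    and T: "T \<subseteq> ksubsets X r" and I: "intersecting T"
    and eq: "card T = (n - 1) choose (r - 1)"
  shows "pinned_on_cycles X r T"
  unfolding pinned_on_cycles_def n
proof
  fix xs assume xs: "xs \<in> permutations_of_set X"
  let ?c = "\<lambda>xs. card {i\<in>{..<n}. arc r xs i \<in> T}"
  have le: "\<forall>ys\<in>permutations_of_set X. ?c ys \<le> r"
    using card_arcs_in_le[OF _ n _ I] r by simp
  have "(\<Sum>ys\<in>permutations_of_set X. ?c ys) = (\<Sum>ys\<in>permutations_of_set X. r)"
    using sum_card_arcs_in[OF fin n _ T] binomial_times_arc_count[of r n] r eq fin n by simp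
  then have "?c xs = r"
  proof (rule contrapos_pp)
    assume "?c xs \<noteq> r"
    then have "\<exists>ys\<in>permutations_of_set X. ?c ys < r" using le xs le_neq_implies_less by blast
    then show "(\<Sum>ys\<in>permutations_of_set X. ?c ys) \<noteq> (\<Sum>ys\<in>permutations_of_set X. r)"
      using sum_strict_mono_ex1[OF finite_permutations_of_set le] by simp
  qed
  then obtain p where "p < n" "{i\<in>{..<n}. arc r xs i \<in> T} = {i. i < n \<and> cdist n i p < r}"
    using cyclically_close_card_eq[OF _ cyclically_close_arcs_in[OF xs n _ I]] r by force
  then show "\<exists>p<n. \<forall>i<n. arc r xs i \<in> T \<longleftrightarrow> cdist n i p < r" by blast
qed

lemma arc_eq_take_drop:
  assumes "i + r \<le> length xs" "1 \<le> r"
  shows "arc r xs i = set (take r (drop i xs))"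
  using assms by (simp add: arc_def rotate_drop_take)

text \<open>The two given arcs lie in \<open>T\<close>, so the pinned position of this ordering is the position
  of \<open>z\<close>, and then every arc through \<open>z\<close> lies in \<open>T\<close>.\<close>
lemma pinned_splice_list:
  assumes pin: "pinned_on_cycles X r T" and n: "card X = n" and nr: "2*r + 1 \<le> n" and r: "1 \<le> r"
    and xs: "xs = l1 @ l2 @ [z] @ q1 @ q2 @ w" "xs \<in> permutations_of_set X"
    and len: "length l1 + length l2 = r - 1" "length q1 + length q2 = r - 1"
      "length l2 + length q1 = r - 1"
    and L: "set (l1 @ l2 @ [z]) \<in> T" and R: "set ([z] @ q1 @ q2) \<in> T"
  shows "set (l2 @ [z] @ q1) \<in> T"
proof -
  have "length xs = n" using xs(2) n length_finite_permutations_of_set by blast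
  obtain p where p: "p < n" "\<forall>i<n. arc r xs i \<in> T \<longleftrightarrow> cdist n i p < r"
    using pin xs(2) n unfolding pinned_on_cycles_def by blast
  have "arc r xs 0 = set (l1 @ l2 @ [z])"
    using arc_eq_take_drop[of 0 r xs] \<open>length xs = n\<close> nr r xs len by (simp add: take_append)
  moreover have "arc r xs (r - 1) = set ([z] @ q1 @ q2)"
  proof -
    have "drop (r - 1) xs = z # q1 @ q2 @ w" using xs len by simp
    moreover have "take r (z # q1 @ q2 @ w) = z # q1 @ q2" using len r by (cases r) auto
    ultimately show ?thesis using arc_eq_take_drop[of "r - 1" r xs] \<open>length xs = n\<close> nr r by simp
  qed
  moreover have "arc r xs (length l1) = set (l2 @ [z] @ q1)"
  proof -
    have "drop (length l1) xs = (l2 @ z # q1) @ (q2 @ w)" using xs by simp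
    moreover have "length (l2 @ z # q1) = r" using len r by auto
    ultimately have "take r (drop (length l1) xs) = l2 @ z # q1" by (metis append_eq_conv_conj)
    then show ?thesis
      using arc_eq_take_drop[of "length l1" r xs] \<open>length xs = n\<close> nr r len by simp
  qed
  moreover have "r - 1 < n" using nr by simp
  ultimately have "cdist n 0 p < r" "cdist n (r - 1) p < r"
    using p L R nr by auto
  then have "p = r - 1" using p nr by (auto simp: cdist_def split: if_splits)
  then have "cdist n (length l1) p < r" "length l1 < n" using len nr r by (auto simp: cdist_def)
  then show ?thesis using p(2) \<open>arc r xs (length l1) = _\<close> by metis
qed

lemma pinned_splice:
  assumes pin: "pinned_on_cycles X r T" and fin: "finite X" and n: "card X = n"
    and nr: "2*r + 1 \<le> n" and r: "1 \<le> r" and T: "T \<subseteq> ksubsets X r"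
    and L: "L \<in> T" and R: "R \<in> T" and LR: "L \<inter> R = {z}"
    and P: "P \<subseteq> L - {z}" and Q: "Q \<subseteq> R - {z}" and card: "card P + card Q = r - 1"
  shows "insert z (P \<union> Q) \<in> T"
proof -
  have LX: "L \<subseteq> X" "card L = r" "R \<subseteq> X" "card R = r" using L R T by (auto simp: ksubsets_def)
  have fin_LR: "finite L" "finite R" using LX fin finite_subset by auto
  have zLR: "z \<in> L" "z \<in> R" using LR by auto
  have fin_PQ: "finite P" "finite Q" using fin_LR P Q by (auto intro: rev_finite_subset)
  define l1 where "l1 = sorted_list_of_set (L - {z} - P)"
  define l2 where "l2 = sorted_list_of_set P"
  define q1 where "q1 = sorted_list_of_set Q"
  define q2 where "q2 = sorted_list_of_set (R - {z} - Q)"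
  define w where "w = sorted_list_of_set (X - (L \<union> R))"
  define xs where "xs = l1 @ l2 @ [z] @ q1 @ q2 @ w"
  have sets: "set l1 = L - {z} - P" "set l2 = P" "set q1 = Q" "set q2 = R - {z} - Q"
    "set w = X - (L \<union> R)"
    using fin_LR fin_PQ fin by (auto simp: l1_def l2_def q1_def q2_def w_def)
  have "card (L - {z} - P) = r - 1 - card P" "card (R - {z} - Q) = r - 1 - card Q"
    using P Q fin_PQ fin_LR LX zLR by (simp_all add: card_Diff_subset)
  then have len: "length l1 = r - 1 - card P" "length l2 = card P" "length q1 = card Q"
    "length q2 = r - 1 - card Q"
    by (auto simp: l1_def l2_def q1_def q2_def)
  have "distinct l1" "distinct l2" "distinct q1" "distinct q2" "distinct w"
    by (simp_all add: l1_def l2_def q1_def q2_def w_def)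
  then have "distinct xs"
    unfolding xs_def distinct_append set_append sets using P Q LR by auto
  moreover have "set xs = X" unfolding xs_def using sets P Q LR zLR LX by auto
  ultimately have xs: "xs \<in> permutations_of_set X" by (auto simp: permutations_of_set_def)
  have "set (l1 @ l2 @ [z]) = L" "set ([z] @ q1 @ q2) = R" using sets P Q zLR by auto
  then have "set (l2 @ [z] @ q1) \<in> T"
    using pinned_splice_list[OF pin n nr r xs_def xs] len card L R by auto
  then show ?thesis using sets by auto
qed

text \<open>Otherwise the parts of \<open>L\<close> and \<open>R\<close> outside \<open>A\<close> would splice to a member of \<open>T\<close>
  disjoint from \<open>A\<close>.\<close>
lemma pinned_member_avoiding_centre:
  assumes pin: "pinned_on_cycles X r T" and fin: "finite X" and n: "card X = n"
    and nr: "2*r + 1 \<le> n" and r: "1 \<le> r" and T: "T \<subseteq> ksubsets X r" and I: "intersecting T"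
    and L: "L \<in> T" and R: "R \<in> T" and LR: "L \<inter> R = {z}" and A: "A \<in> T" and zA: "z \<notin> A"
  shows "A \<subseteq> L \<union> R"
proof (rule ccontr)
  assume "\<not> A \<subseteq> L \<union> R"
  then obtain w where w: "w \<in> A" "w \<notin> L \<union> R" by blast
  have cs: "card L = r" "card R = r" "card A = r" using L R A T by (auto simp: ksubsets_def)
  have fs: "finite L" "finite R" "finite A"
    using L R A T fin by (auto simp: ksubsets_def intro: rev_finite_subset)
  have zLR: "z \<in> L" "z \<in> R" using LR by auto
  define UL where "UL = L - {z} - A"
  define UR where "UR = R - {z} - A"
  have "card (A \<inter> L) + card (A \<inter> R) = card ((A \<inter> L) \<union> (A \<inter> R))"
    using LR zA fs by (intro card_Un_disjoint[symmetric]) auto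
  also have "\<dots> \<le> card (A - {w})" using w fs by (intro card_mono) auto
  finally have AL_AR: "card (A \<inter> L) + card (A \<inter> R) \<le> r - 1" using w cs fs by simp
  have "UL = (L - {z}) - (A \<inter> L)" "UR = (R - {z}) - (A \<inter> R)"
    unfolding UL_def UR_def by auto
  moreover have "A \<inter> L \<subseteq> L - {z}" "A \<inter> R \<subseteq> R - {z}" using zA by auto
  ultimately have UL: "card UL = r - 1 - card (A \<inter> L)" and UR: "card UR = r - 1 - card (A \<inter> R)"
    using fs cs zLR by (simp_all add: card_Diff_subset)
  then have "r - 1 - card UL \<le> card UR" using AL_AR by linarith
  then obtain Q where Q: "Q \<subseteq> UR" "card Q = r - 1 - card UL"
    by (meson obtain_subset_with_card_n)
  have "UL \<subseteq> L - {z}" "Q \<subseteq> R - {z}" "card UL + card Q = r - 1"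
    using Q UL unfolding UL_def UR_def by auto
  then have "insert z (UL \<union> Q) \<in> T" by (rule pinned_splice[OF pin fin n nr r T L R LR])
  moreover have "A \<inter> insert z (UL \<union> Q) = {}" using zA Q by (auto simp: UL_def UR_def)
  ultimately show False using A I unfolding intersecting_def by blast
qed

definition star :: "nat set \<Rightarrow> nat \<Rightarrow> nat \<Rightarrow> nat set set" where
  "star X r z = {S \<in> ksubsets X r. z \<in> S}"

lemma card_star:
  assumes "finite X" "z \<in> X" "1 \<le> r"
  shows "card (star X r z) = (card X - 1) choose (r - 1)"
proof -
  have "star X r z = insert z ` {B. B \<subseteq> X - {z} \<and> card B = r - 1}"
  proof (intro equalityI subsetI)
    fix S assume "S \<in> star X r z"
    then have "S \<subseteq> X" "card S = r" "z \<in> S" by (auto simp: star_def ksubsets_def)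
    moreover have "finite S" using \<open>S \<subseteq> X\<close> assms(1) by (rule finite_subset)
    ultimately show "S \<in> insert z ` {B. B \<subseteq> X - {z} \<and> card B = r - 1}"
      by (intro image_eqI[of S _ "S - {z}"]) auto
  next
    fix S assume "S \<in> insert z ` {B. B \<subseteq> X - {z} \<and> card B = r - 1}"
    then obtain B where B: "S = insert z B" "B \<subseteq> X - {z}" "card B = r - 1" by blast
    have "finite B" "z \<notin> B" using B(2) assms(1) by (auto intro: rev_finite_subset)
    then show "S \<in> star X r z" using B assms by (auto simp: star_def ksubsets_def)
  qed
  moreover have "inj_on (insert z) {B. B \<subseteq> X - {z} \<and> card B = r - 1}"
    by (rule inj_onI) (metis Diff_insert_absorb mem_Collect_eq subset_Diff_insert)
  ultimately have "card (star X r z) = card {B. B \<subseteq> X - {z} \<and> card B = r - 1}"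
    by (simp add: card_image)
  also have "\<dots> = (card X - 1) choose (r - 1)" using n_subsets[of "X - {z}"] assms by simp
  finally show ?thesis .
qed

lemma binomial_middle_less:
  assumes "2 \<le> r" "2*r + 1 \<le> n"
  shows "(2*r - 1) choose r < (n - 1) choose (r - 1)"
proof -
  have "(2*r - 1) choose r = (2*r - 1) choose (r - 1)"
    using binomial_symmetric[of r "2*r - 1"] assms by simp
  also have "\<dots> < ((2*r - 1) choose (r - 1)) + ((2*r - 1) choose (r - 2))"
    using assms by simp
  also have "\<dots> = (2*r) choose (r - 1)"
  proof -
    have "Suc (2*r - 1) choose Suc (r - 2)
        = ((2*r - 1) choose (r - 2)) + ((2*r - 1) choose Suc (r - 2))" by simp
    moreover have "Suc (2*r - 1) = 2*r" "Suc (r - 2) = r - 1" using assms by auto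
    ultimately show ?thesis by simp
  qed
  also have "\<dots> \<le> (n - 1) choose (r - 1)" using assms by (intro binomial_right_mono) auto
  finally show ?thesis .
qed

lemma exists_member_not_subset:
  assumes "finite U" "T \<subseteq> ksubsets X r" "card U choose r < card T"
  shows "\<exists>M\<in>T. \<not> M \<subseteq> U"
proof (rule ccontr)
  assume "\<not> (\<exists>M\<in>T. \<not> M \<subseteq> U)"
  then have "T \<subseteq> {B. B \<subseteq> U \<and> card B = r}" using assms(2) by (auto simp: ksubsets_def)
  then have "card T \<le> card U choose r"
    using card_mono[of "{B. B \<subseteq> U \<and> card B = r}"] n_subsets[OF assms(1)] assms(1) by simp
  then show False using assms(3) by simp
qed

lemma pinned_exists_meeting_pair:
  assumes pin: "pinned_on_cycles X r T" and fin: "finite X" and n: "card X = n"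
    and nr: "2*r + 1 \<le> n" and r: "1 \<le> r"
  obtains L R z where "L \<in> T" "R \<in> T" "L \<inter> R = {z}" "z \<in> X"
proof -
  obtain xs where xs: "xs \<in> permutations_of_set X"
    using fin permutations_of_set_empty_iff by blast
  have len: "length xs = n" "distinct xs"
    using xs n length_finite_permutations_of_set by (auto simp: permutations_of_set_def)
  obtain p where p: "p < n" "\<forall>i<n. arc r xs i \<in> T \<longleftrightarrow> cdist n i p < r"
    using pin xs n unfolding pinned_on_cycles_def by blast
  define i where "i = (if r - 1 \<le> p then p - (r - 1) else n + p - (r - 1))"
  have i: "i < n" "cdist n i p = r - 1" using p nr r by (auto simp: i_def cdist_def)
  have rn: "r \<le> n" using nr by simp
  have "arc r xs i \<in> T" "arc r xs p \<in> T" using p i r by (auto simp: cdist_def)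
  moreover have "arc r xs i \<inter> arc r xs p = {xs ! p}"
  proof
    show "{xs ! p} \<subseteq> arc r xs i \<inter> arc r xs p"
      using arc_conv_cdist[OF len(1) i(1) rn] arc_conv_cdist[OF len(1) p(1) rn] i p r
      by (auto simp: cdist_def)
    show "arc r xs i \<inter> arc r xs p \<subseteq> {xs ! p}"
    proof
      fix x assume "x \<in> arc r xs i \<inter> arc r xs p"
      then obtain q q' where q: "q < n" "cdist n i q < r" "x = xs ! q"
        "q' < n" "cdist n p q' < r" "x = xs ! q'"
        using arc_conv_cdist[OF len(1) i(1) rn] arc_conv_cdist[OF len(1) p(1) rn] by auto
      then have "q = q'" using len nth_eq_iff_index_eq by metis
      then have "q = p" using q i p nr by (auto simp: cdist_def split: if_splits)
      then show "x \<in> {xs ! p}" using q by simp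
    qed
  qed
  moreover have "xs ! p \<in> X" using xs p len by (auto simp: permutations_of_set_def)
  ultimately show ?thesis using that by blast
qed

text \<open>\<open>M \<inter> (L \<union> R)\<close> has at most \<open>r - 1\<close> points, so \<open>r - 1\<close> points of \<open>L \<union> R - M - {z, u}\<close>
  remain; spliced with \<open>z\<close> they form \<open>L'\<close>.\<close>
lemma pinned_exists_pair_avoiding:
  assumes pin: "pinned_on_cycles X r T" and fin: "finite X" and n: "card X = n"
    and nr: "2*r + 1 \<le> n" and r: "2 \<le> r" and T: "T \<subseteq> ksubsets X r"
    and L: "L \<in> T" and R: "R \<in> T" and LR: "L \<inter> R = {z}"
    and M: "M \<in> T" "z \<in> M" "u0 \<in> M" "u0 \<notin> L \<union> R" and u: "u \<in> L \<union> R - {z} - M"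
  obtains L' where "L' \<in> T" "L' \<inter> M = {z}" "u \<notin> L'"
proof -
  have cs: "card L = r" "card R = r" "card M = r" using L R M T by (auto simp: ksubsets_def)
  have fs: "finite L" "finite R" "finite M"
    using L R M T fin by (auto simp: ksubsets_def intro: rev_finite_subset)
  define U where "U = L \<union> R - {z} - M"
  have "card (L \<union> R) = 2*r - 1"
    using card_Un_Int[of L R] fs cs LR by simp
  moreover have "z \<in> L \<union> R" using LR by auto
  ultimately have "card (L \<union> R - {z}) = 2*r - 2" using fs by (simp add: card_Diff_singleton)
  moreover have "card (M \<inter> (L \<union> R - {z})) \<le> r - 2"
  proof -
    have "card (M \<inter> (L \<union> R - {z})) \<le> card (M - {u0, z})"
      using M fs by (intro card_mono) auto
    also have "\<dots> = r - 2"
    proof -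
      have "u0 \<noteq> z" using M LR by auto
      then show ?thesis using cs M fs by (simp add: card_Diff_subset)
    qed
    finally show ?thesis .
  qed
  moreover have "U = (L \<union> R - {z}) - (M \<inter> (L \<union> R - {z}))" unfolding U_def by auto
  ultimately have "r \<le> card U" using fs r by (simp add: card_Diff_subset)
  then have "r - 1 \<le> card (U - {u})" using u fs by (simp add: U_def)
  then obtain V where V: "V \<subseteq> U - {u}" "card V = r - 1" by (meson obtain_subset_with_card_n)
  have VLR: "(V \<inter> L) \<union> (V \<inter> R) = V" using V by (auto simp: U_def)
  have "(V \<inter> L) \<inter> (V \<inter> R) = {}" using V LR by (auto simp: U_def)
  then have "card (V \<inter> L) + card (V \<inter> R) = card V"
    using card_Un_disjoint[of "V \<inter> L" "V \<inter> R"] fs VLR by simp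
  then have "insert z ((V \<inter> L) \<union> (V \<inter> R)) \<in> T"
    using V pinned_splice[OF pin fin n nr _ T L R LR, of "V \<inter> L" "V \<inter> R"] r by (auto simp: U_def)
  moreover have "insert z V \<inter> M = {z}" "u \<notin> insert z V" using V M u by (auto simp: U_def)
  ultimately show ?thesis using that VLR by auto
qed

lemma pinned_members_contain_centre:
  assumes pin: "pinned_on_cycles X r T" and fin: "finite X" and n: "card X = n"
    and nr: "2*r + 1 \<le> n" and r: "1 \<le> r" and T: "T \<subseteq> ksubsets X r" and I: "intersecting T"
    and L: "L \<in> T" and R: "R \<in> T" and LR: "L \<inter> R = {z}" and eq: "card T = (n - 1) choose (r - 1)"
    and A: "A \<in> T"
  shows "z \<in> A"
proof (rule ccontr)
  assume zA: "z \<notin> A"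
  note avoid = pinned_member_avoiding_centre[OF pin fin n nr r T I]
  have A_LR: "A \<subseteq> L \<union> R" using avoid[OF L R LR A zA] .
  have cs: "card L = r" "card R = r" "card A = r" using L R A T by (auto simp: ksubsets_def)
  have fs: "finite L" "finite R"
    using L R T fin by (auto simp: ksubsets_def intro: rev_finite_subset)
  show False
  proof (cases "r = 1")
    case True
    moreover have "z \<in> L" using LR by auto
    ultimately have "L = {z}" using cs by (metis card_1_singletonE singletonD)
    moreover have "A \<inter> L \<noteq> {}" using I A L unfolding intersecting_def by blast
    ultimately show False using zA by auto
  next
    case False
    have "card (L \<union> R) = 2*r - 1" using card_Un_Int[of L R] fs cs LR by simp
    then have "card (L \<union> R) choose r < card T"
      using binomial_middle_less[OF _ nr] False r eq by simp
    then obtain M where M: "M \<in> T" "\<not> M \<subseteq> L \<union> R"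
      using exists_member_not_subset[OF _ T] fs by blast
    then obtain u0 where u0: "u0 \<in> M" "u0 \<notin> L \<union> R" by blast
    have zM: "z \<in> M" using avoid[OF L R LR M(1)] M(2) by blast
    have "\<not> A \<subseteq> M"
    proof
      assume "A \<subseteq> M"
      moreover have "finite M" "card M = r"
        using M(1) T fin by (auto simp: ksubsets_def intro: rev_finite_subset)
      ultimately have "A = M" using cs(3) card_subset_eq by metis
      then show False using zM zA by simp
    qed
    then obtain u where u: "u \<in> A" "u \<notin> M" by blast
    then have "u \<in> L \<union> R - {z} - M" using A_LR zA by auto
    moreover have "2 \<le> r" using False r by simp
    ultimately obtain L' where L': "L' \<in> T" "L' \<inter> M = {z}" "u \<notin> L'"
      using pinned_exists_pair_avoiding[OF pin fin n nr _ T L R LR M(1) zM u0] by blast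
    then show False using avoid[OF L'(1) M(1) L'(2) A zA] u by blast
  qed
qed

theorem erdos_ko_rado_unique:
  assumes fin: "finite X" and n: "card X = n" and r: "1 \<le> r" and nr: "2*r + 1 \<le> n"
    and T: "T \<subseteq> ksubsets X r" and I: "intersecting T" and eq: "card T = (n - 1) choose (r - 1)"
  shows "\<exists>z\<in>X. T = star X r z"
proof -
  have pin: "pinned_on_cycles X r T" using erdos_ko_rado_equality_pinned[OF assms] .
  obtain L R z where LR: "L \<in> T" "R \<in> T" "L \<inter> R = {z}" "z \<in> X"
    using pinned_exists_meeting_pair[OF pin fin n nr r] .
  have "T \<subseteq> star X r z"
    using pinned_members_contain_centre[OF pin fin n nr r T I LR(1-3) eq] T by (auto simp: star_def)
  moreover have "card (star X r z) = card T" using card_star[OF fin LR(4) r] n eq by simp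
  moreover have "finite (star X r z)" using finite_ksubsets[OF fin] by (simp add: star_def)
  ultimately show ?thesis using card_subset_eq LR(4) by metis
qed

section \<open>The families \<open>H m n k t\<close>\<close>

lemma inter_nonempty_if_card_gt:
  assumes "P \<subseteq> Z" "Q \<subseteq> Z" "finite Z" "card Z < card P + card Q"
  shows "P \<inter> Q \<noteq> {}"
proof
  assume "P \<inter> Q = {}"
  have "finite P" "finite Q" using assms(1-3) finite_subset by auto
  then have "card P + card Q = card (P \<union> Q)" using \<open>P \<inter> Q = {}\<close> by (simp add: card_Un_disjoint)
  also have "\<dots> \<le> card Z" using assms by (intro card_mono) auto
  finally show False using assms(4) by simp
qed

locale extension =
  fixes n k m :: nat
  assumes k_le_n: "k \<le> n" and n_less_2k: "n < 2*k" and n_le_m: "n \<le> m"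
begin

abbreviation old :: "nat set" where "old \<equiv> {1..n}"
abbreviation new :: "nat set" where "new \<equiv> {n+1..m}"

text \<open>The level of a set \<open>A\<close> is \<open>card (A \<inter> new)\<close>; \<open>lmax\<close> is the top level, both of
  \<open>H m n k t\<close> and of any \<open>(m,n,k)\<close>-intersecting family.\<close>
abbreviation lmax :: nat where "lmax \<equiv> 2*k - n - 1"

definition H_level :: "nat \<Rightarrow> nat \<Rightarrow> nat set set" where
  "H_level t i = {A \<union> B \<union> {t} | A B. A \<in> ksubsets (old - {t}) (k - i - 1) \<and> B \<in> ksubsets new i}"

lemma H_eq: "H m n k t = ksubsets old k \<union> (\<Union>i\<in>{1..lmax}. H_level t i)"
  unfolding H_def H_level_def by simp

lemma H_level_eq_image:
  "H_level t i = (\<lambda>(A, B). A \<union> B \<union> {t}) ` (ksubsets (old - {t}) (k - i - 1) \<times> ksubsets new i)"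
  unfolding H_level_def by auto

lemma finite_H_level: "finite (H_level t i)"
  unfolding H_level_eq_image by (simp add: finite_ksubsets)

lemma H_level_memberD:
  assumes t: "t \<in> old" and i: "i \<in> {1..lmax}" and X: "X \<in> H_level t i"
  shows "t \<in> X" "card (X \<inter> new) = i" "card (X \<inter> old) = k - i" "X \<in> ksubsets {1..m} k"
proof -
  obtain A B where AB: "X = A \<union> B \<union> {t}" "A \<subseteq> old - {t}" "card A = k - i - 1"
    "B \<subseteq> new" "card B = i"
    using X unfolding H_level_def ksubsets_def by blast
  have fin: "finite A" "finite B" using AB(2,4) by (auto intro: rev_finite_subset)
  have "X \<inter> new = B" "X \<inter> old = insert t A" using AB t by auto
  moreover have "old \<inter> new = {}" by auto
  then have "t \<notin> A" "A \<inter> B = {}" using AB by blast+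
  moreover have "k - i - 1 + 1 = k - i" "k - i - 1 + i + 1 = k" using i n_less_2k k_le_n by auto
  ultimately show "t \<in> X" "card (X \<inter> new) = i" "card (X \<inter> old) = k - i" "X \<in> ksubsets {1..m} k"
    using AB fin t n_le_m by (auto simp: ksubsets_def card_Un_disjoint)
qed

lemma card_H_level:
  assumes t: "t \<in> old"
  shows "card (H_level t i) = ((n - 1) choose (k - i - 1)) * ((m - n) choose i)"
proof -
  let ?f = "\<lambda>(A, B). A \<union> B \<union> {t}"
  let ?D = "ksubsets (old - {t}) (k - i - 1) \<times> ksubsets new i"
  have "inj_on ?f ?D"
  proof (rule inj_onI)
    fix x y assume xy: "x \<in> ?D" "y \<in> ?D" "?f x = ?f y"
    obtain A B A' B' where e: "x = (A, B)" "y = (A', B')" by fastforce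
    have "old \<inter> new = {}" by auto
    have "A \<subseteq> old - {t}" "B \<subseteq> new" "A' \<subseteq> old - {t}" "B' \<subseteq> new"
      using xy(1,2) e by (auto simp: ksubsets_def)
    then have "A = (A \<union> B \<union> {t}) \<inter> old - {t}" "B = (A \<union> B \<union> {t}) \<inter> new"
      "A' = (A' \<union> B' \<union> {t}) \<inter> old - {t}" "B' = (A' \<union> B' \<union> {t}) \<inter> new"
      using t \<open>old \<inter> new = {}\<close> by blast+
    then show "x = y" using xy(3) e by (metis case_prod_conv)
  qed
  moreover have "H_level t i = ?f ` ?D" by (rule H_level_eq_image)
  ultimately have "card (H_level t i) =
    card (ksubsets (old - {t}) (k - i - 1)) * card (ksubsets new i)"
    by (simp add: card_image card_cartesian_product)
  then show ?thesis using t by (simp add: ksubsets_def n_subsets)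
qed

lemma card_H:
  assumes t: "t \<in> old"
  shows "card (H m n k t) = h m n k"
proof -
  have "X \<notin> H_level t i" if "X \<in> ksubsets old k" "i \<in> {1..lmax}" for X i
  proof
    assume "X \<in> H_level t i"
    then have "card (X \<inter> new) = i" by (rule H_level_memberD(2)[OF t that(2)])
    moreover have "X \<inter> new = {}" using that(1) by (auto simp: ksubsets_def)
    ultimately show False using that(2) by simp
  qed
  then have levels_disjoint: "ksubsets old k \<inter> (\<Union>i\<in>{1..lmax}. H_level t i) = {}" by blast
  have "card (\<Union>i\<in>{1..lmax}. H_level t i) = (\<Sum>i=1..lmax. card (H_level t i))"
  proof (rule card_UN_disjoint)
    show "\<forall>i\<in>{1..lmax}. \<forall>j\<in>{1..lmax}. i \<noteq> j \<longrightarrow> H_level t i \<inter> H_level t j = {}"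
      using H_level_memberD(2)[OF t] by blast
  qed (simp_all add: finite_H_level)
  then have "card (H m n k t) = card (ksubsets old k) + (\<Sum>i=1..lmax. card (H_level t i))"
    unfolding H_eq using levels_disjoint finite_H_level finite_ksubsets[of old k]
    by (subst card_Un_disjoint) auto
  then show ?thesis using card_H_level[OF t] by (simp add: h_def ksubsets_def n_subsets)
qed

lemma old_ksubset_meets_H:
  assumes t: "t \<in> old" and P: "P \<in> ksubsets old k" and X: "X \<in> H m n k t"
  shows "P \<inter> X \<noteq> {}"
proof -
  obtain Q where Q: "Q \<subseteq> X" "Q \<subseteq> old" "n < card P + card Q"
  proof (cases "X \<in> ksubsets old k")
    case True
    show ?thesis
    proof (rule that[of X])
      show "X \<subseteq> old" "n < card P + card X" using True P n_less_2k by (simp_all add: ksubsets_def)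
    qed simp
  next
    case False
    then obtain i where i: "i \<in> {1..lmax}" "X \<in> H_level t i" using X unfolding H_eq by blast
    then have "card (X \<inter> old) = k - i" by (rule H_level_memberD(3)[OF t])
    moreover have "card P = k" using P by (simp add: ksubsets_def)
    moreover have "n < k + (k - i)" using i n_less_2k by auto
    ultimately show ?thesis using that[of "X \<inter> old"] by simp
  qed
  have "P \<subseteq> old" using P by (simp add: ksubsets_def)
  then have "P \<inter> Q \<noteq> {}" using Q by (intro inter_nonempty_if_card_gt[of _ old]) simp_all
  then show ?thesis using Q by blast
qed

lemma mnk_intersecting_H:
  assumes t: "t \<in> old"
  shows "mnk_intersecting m n k (H m n k t)"
  unfolding mnk_intersecting_def
proof (intro conjI)
  show "ksubsets old k \<subseteq> H m n k t" unfolding H_eq by blast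
  have "ksubsets old k \<subseteq> ksubsets {1..m} k" using n_le_m by (auto simp: ksubsets_def)
  then show "H m n k t \<subseteq> ksubsets {1..m} k"
    unfolding H_eq using H_level_memberD(4)[OF t] by blast
  show "intersecting (H m n k t)" unfolding intersecting_def
  proof (intro ballI)
    fix X Y assume XY: "X \<in> H m n k t" "Y \<in> H m n k t"
    show "X \<inter> Y \<noteq> {}"
    proof (cases "X \<in> ksubsets old k \<or> Y \<in> ksubsets old k")
      case True
      then show ?thesis using old_ksubset_meets_H[OF t] XY by blast
    next
      case False
      then have "t \<in> X" "t \<in> Y" using XY H_level_memberD(1)[OF t] unfolding H_eq by blast+
      then show ?thesis by blast
    qed
  qed
qed

end

section \<open>Extremal families for large \<open>m\<close>\<close>

lemma binomial_pred_dominated: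
  fixes N s c :: nat
  assumes s: "1 \<le> s" and N: "c * s * s + s \<le> N"
  shows "c * s * (N choose (s - 1)) < N choose s"
proof -
  have "0 < N choose (s - 1)" using s N by simp
  then have "(c * s * s) * (N choose (s - 1)) < (N - (s - 1)) * (N choose (s - 1))"
    using N s by (intro mult_strict_right_mono) auto
  also have "\<dots> = s * (N choose s)"
    using binomial_absorb_comp[of N "s - 1"] binomial_absorption[of "s - 1" N] s by simp
  finally show ?thesis using s by (simp add: ac_simps)
qed

text \<open>The bound on \<open>m - n\<close> is what \<open>binomial_pred_dominated\<close> needs for \<open>c = 2 * 2^n\<close>.\<close>
locale large_extension = extension +
  assumes n_plus_3_le: "n + 3 \<le> 2*k"
    and large: "2 * 2^n * (2*k - n - 1) * (2*k - n - 1) + (2*k - n - 1) \<le> m - n"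

context large_extension
begin

lemma lmax_facts: "2 \<le> lmax" "k - lmax = n - k + 1" "2*(n - k + 1) + 1 \<le> n"
  using k_le_n n_plus_3_le by auto

lemma double_lmax_le: "2 * lmax \<le> m - n"
proof -
  have "1 \<le> 2^n * lmax" using lmax_facts(1) by (simp add: Suc_le_eq)
  then have "2 * lmax \<le> 2 * 2^n * lmax * lmax"
    using mult_le_mono1[of 1 "2^n * lmax" "2 * lmax"] by (simp add: ac_simps)
  then show ?thesis using large by linarith
qed

end

locale large_family = large_extension +
  fixes F :: "nat set set"
  assumes family: "mnk_intersecting m n k F"
begin

lemma family_memberD:
  assumes "A \<in> F"
  shows "A \<subseteq> old \<union> new" "card A = k" "card (A \<inter> old) + card (A \<inter> new) = k"
proof -
  have "old \<union> new = {1..m}" using n_le_m by auto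
  then show A: "A \<subseteq> old \<union> new" "card A = k"
    using assms family by (auto simp: mnk_intersecting_def ksubsets_def)
  then have split: "(A \<inter> old) \<union> (A \<inter> new) = A" by blast
  have "card ((A \<inter> old) \<union> (A \<inter> new)) = card (A \<inter> old) + card (A \<inter> new)"
    by (rule card_Un_disjoint) auto
  then show "card (A \<inter> old) + card (A \<inter> new) = k" unfolding split A(2) by simp
qed

lemma family_intersect: "A \<in> F \<Longrightarrow> B \<in> F \<Longrightarrow> A \<inter> B \<noteq> {}"
  using family by (auto simp: mnk_intersecting_def intersecting_def)

lemma old_ksubsets_subset_family: "ksubsets old k \<subseteq> F"
  using family by (simp add: mnk_intersecting_def)

lemma finite_family: "finite F"
  using family finite_ksubsets[of "{1..m}" k]
  by (auto simp: mnk_intersecting_def intro: rev_finite_subset)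

lemma level_le_lmax:
  assumes A: "A \<in> F"
  shows "card (A \<inter> new) \<le> lmax"
proof (rule ccontr)
  assume "\<not> card (A \<inter> new) \<le> lmax"
  then have "k \<le> card (old - A)"
    using family_memberD(3)[OF A] k_le_n by (simp add: card_Diff_subset_Int Int_commute)
  then obtain P where P: "P \<subseteq> old - A" "card P = k" by (meson obtain_subset_with_card_n)
  then have "P \<in> F" using old_ksubsets_subset_family by (auto simp: ksubsets_def)
  moreover have "P \<inter> A = {}" using P by auto
  ultimately show False using family_intersect A by blast
qed

definition top_fibre :: "nat set \<Rightarrow> nat set set" where
  "top_fibre S = {A \<in> F. card (A \<inter> new) = lmax \<and> A \<inter> old = S}"

lemma top_fibre_memberD:
  assumes "A \<in> top_fibre S"
  shows "A \<in> F" "A = S \<union> (A \<inter> new)" "S \<subseteq> old" "A \<inter> new \<in> ksubsets new lmax"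
proof -
  show A: "A \<in> F" "S \<subseteq> old" "A \<inter> new \<in> ksubsets new lmax"
    using assms by (auto simp: top_fibre_def ksubsets_def)
  show "A = S \<union> (A \<inter> new)"
    using assms family_memberD(1)[OF A(1)] unfolding top_fibre_def by blast
qed

lemma top_fibre_subset_image: "top_fibre S \<subseteq> (\<lambda>B. S \<union> B) ` ksubsets new lmax"
proof
  fix A assume "A \<in> top_fibre S"
  from top_fibre_memberD(2,4)[OF this] show "A \<in> (\<lambda>B. S \<union> B) ` ksubsets new lmax"
    by (rule image_eqI)
qed

lemma card_top_fibre_le: "card (top_fibre S) \<le> (m - n) choose lmax"
proof -
  have "card (top_fibre S) \<le> card ((\<lambda>B. S \<union> B) ` ksubsets new lmax)"
    by (intro card_mono finite_imageI finite_ksubsets top_fibre_subset_image) simp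
  also have "\<dots> \<le> card (ksubsets new lmax)" by (intro card_image_le finite_ksubsets) simp
  finally show ?thesis by (simp add: ksubsets_def n_subsets)
qed

lemma card_top_fibre_le_if_hit:
  assumes C: "C \<subseteq> new" "card C \<le> lmax" and hit: "\<forall>A\<in>top_fibre S. A \<inter> C \<noteq> {}"
  shows "card (top_fibre S) \<le> lmax * ((m - n - 1) choose (lmax - 1))"
proof -
  have finC: "finite C" using C(1) by (rule finite_subset) simp
  let ?through = "\<lambda>y. (\<lambda>B. S \<union> B) ` {B \<in> ksubsets new lmax. y \<in> B}"
  have "top_fibre S \<subseteq> (\<Union>y\<in>C. ?through y)"
  proof
    fix A assume A: "A \<in> top_fibre S"
    obtain y where y: "y \<in> C" "y \<in> A" using hit A by blast
    then have "A \<inter> new \<in> {B \<in> ksubsets new lmax. y \<in> B}"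
      using top_fibre_memberD(4)[OF A] C(1) by blast
    then have "A \<in> ?through y"
      by (rule image_eqI[where f="\<lambda>B. S \<union> B", OF top_fibre_memberD(2)[OF A]])
    then show "A \<in> (\<Union>y\<in>C. ?through y)" using y(1) by blast
  qed
  then have "card (top_fibre S) \<le> card (\<Union>y\<in>C. ?through y)"
    using finC by (intro card_mono finite_UN_I finite_imageI) (auto simp: finite_ksubsets)
  also have "\<dots> \<le> (\<Sum>y\<in>C. card (?through y))" by (rule card_UN_le[OF finC])
  also have "\<dots> \<le> (\<Sum>y\<in>C. (m - n - 1) choose (lmax - 1))"
  proof (rule sum_mono)
    fix y assume "y \<in> C"
    have "card (?through y) \<le> card (star new lmax y)"
      unfolding star_def by (rule card_image_le) (simp add: finite_ksubsets)
    also have "\<dots> = (m - n - 1) choose (lmax - 1)"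
      using card_star[of new y lmax] \<open>y \<in> C\<close> C(1) lmax_facts(1) by auto
    finally show "card (?through y) \<le> (m - n - 1) choose (lmax - 1)" .
  qed
  also have "\<dots> \<le> lmax * ((m - n - 1) choose (lmax - 1))" using C(2) by simp
  finally show ?thesis .
qed

text \<open>A top trace is heavy if its fibre is too large to be pierced by the new part of a
  single member of \<open>F\<close>; heavy traces therefore pairwise intersect.\<close>
definition heavy_traces :: "nat set set" where
  "heavy_traces = {S \<in> ksubsets old (n - k + 1).
     lmax * ((m - n - 1) choose (lmax - 1)) < card (top_fibre S)}"

lemma top_fibre_hits_new_part:
  assumes A: "A \<in> F" and S: "S \<inter> A = {}"
  shows "\<forall>B\<in>top_fibre S. B \<inter> (A \<inter> new) \<noteq> {}"
proof
  fix B assume B: "B \<in> top_fibre S"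
  obtain x where x: "x \<in> B" "x \<in> A" using family_intersect[OF top_fibre_memberD(1)[OF B] A] by blast
  have "x \<notin> S" using x(2) S by blast
  then have "x \<in> new" using x(1) top_fibre_memberD(2)[OF B] by blast
  then show "B \<inter> (A \<inter> new) \<noteq> {}" using x by blast
qed

lemma intersecting_heavy_traces: "intersecting heavy_traces"
  unfolding intersecting_def
proof (intro ballI notI)
  fix S1 S2 assume S: "S1 \<in> heavy_traces" "S2 \<in> heavy_traces" and disj: "S1 \<inter> S2 = {}"
  have "top_fibre S1 \<noteq> {}" using S(1) by (auto simp: heavy_traces_def)
  then obtain A where A: "A \<in> top_fibre S1" by blast
  have "S2 \<subseteq> old" using S(2) by (simp add: heavy_traces_def ksubsets_def)
  moreover have "old \<inter> new = {}" "A \<subseteq> S1 \<union> new" using top_fibre_memberD(2)[OF A] by auto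
  ultimately have "S2 \<inter> A = {}" using disj by blast
  then have "card (top_fibre S2) \<le> lmax * ((m - n - 1) choose (lmax - 1))"
    using top_fibre_hits_new_part[OF top_fibre_memberD(1)[OF A]] top_fibre_memberD(4)[OF A]
    by (intro card_top_fibre_le_if_hit[of "A \<inter> new"]) (auto simp: ksubsets_def)
  then show False using S(2) by (simp add: heavy_traces_def)
qed

lemma centre_mem_if_heavy_star:
  assumes t: "t \<in> old" and heavy: "heavy_traces = star old (n - k + 1) t"
    and A: "A \<in> F" "A \<inter> new \<noteq> {}"
  shows "t \<in> A"
proof (rule ccontr)
  assume tA: "t \<notin> A"
  define i where "i = card (A \<inter> new)"
  have i: "1 \<le> i" "i \<le> lmax"
    using A level_le_lmax unfolding i_def by (auto simp: Suc_le_eq card_gt_0_iff)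
  have "card (old - A) = n - (k - i)"
    using family_memberD(3)[OF A(1)] unfolding i_def by (simp add: card_Diff_subset_Int Int_commute)
  then have "card (old - A - {t}) = n - (k - i) - 1" using t tA by simp
  then have "n - k \<le> card (old - A - {t})" using i lmax_facts by linarith
  then obtain P where P: "P \<subseteq> old - A - {t}" "card P = n - k" by (meson obtain_subset_with_card_n)
  have "finite P" "t \<notin> P" using P(1) by (auto intro: rev_finite_subset)
  moreover have "P \<subseteq> old" using P(1) by blast
  ultimately have "insert t P \<in> heavy_traces"
    using P(2) t unfolding heavy by (simp add: star_def ksubsets_def)
  moreover have "insert t P \<inter> A = {}" using P tA by blast
  then have "card (top_fibre (insert t P)) \<le> lmax * ((m - n - 1) choose (lmax - 1))"
    using top_fibre_hits_new_part[OF A(1) \<open>insert t P \<inter> A = {}\<close>] i unfolding i_def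
    by (intro card_top_fibre_le_if_hit[of "A \<inter> new"]) auto
  ultimately show False by (simp add: heavy_traces_def)
qed

lemma family_subset_H:
  assumes t: "t \<in> old" and heavy: "heavy_traces = star old (n - k + 1) t"
  shows "F \<subseteq> H m n k t"
proof
  fix A assume A: "A \<in> F"
  show "A \<in> H m n k t"
  proof (cases "A \<inter> new = {}")
    case True
    then have "A \<in> ksubsets old k" using family_memberD(1,2)[OF A] by (auto simp: ksubsets_def)
    then show ?thesis unfolding H_eq by blast
  next
    case False
    define i where "i = card (A \<inter> new)"
    have i: "i \<in> {1..lmax}"
      using False level_le_lmax[OF A] unfolding i_def by (auto simp: Suc_le_eq card_gt_0_iff)
    have tA: "t \<in> A" using centre_mem_if_heavy_star[OF t heavy A False] .
    have "card (A \<inter> old - {t}) = k - i - 1"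
      using family_memberD(3)[OF A] tA t unfolding i_def by simp
    then have "A \<inter> old - {t} \<in> ksubsets (old - {t}) (k - i - 1)" by (auto simp: ksubsets_def)
    moreover have "A \<inter> new \<in> ksubsets new i" by (simp add: i_def ksubsets_def)
    moreover have "A = (A \<inter> old - {t}) \<union> (A \<inter> new) \<union> {t}"
      using family_memberD(1)[OF A] tA by blast
    ultimately have "A \<in> H_level t i" unfolding H_level_def by blast
    then show ?thesis using i unfolding H_eq by blast
  qed
qed

lemma card_low_levels:
  "card {A\<in>F. card (A \<inter> new) < lmax} \<le> 2^n * (lmax * ((m - n) choose (lmax - 1)))"
proof -
  define W where "W = {B. B \<subseteq> new \<and> card B < lmax}"
  have "{A\<in>F. card (A \<inter> new) < lmax} \<subseteq> (\<lambda>(P, B). P \<union> B) ` (Pow old \<times> W)"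
  proof
    fix A assume "A \<in> {A\<in>F. card (A \<inter> new) < lmax}"
    then have A: "A \<in> F" "card (A \<inter> new) < lmax" by auto
    have "A = (\<lambda>(P, B). P \<union> B) (A \<inter> old, A \<inter> new)" using family_memberD(1)[OF A(1)] by auto
    moreover have "(A \<inter> old, A \<inter> new) \<in> Pow old \<times> W" using A(2) by (auto simp: W_def)
    ultimately show "A \<in> (\<lambda>(P, B). P \<union> B) ` (Pow old \<times> W)" by (rule image_eqI)
  qed
  moreover have finW: "finite W" unfolding W_def by (rule finite_subset[of _ "Pow new"]) auto
  ultimately have "card {A\<in>F. card (A \<inter> new) < lmax} \<le> card ((\<lambda>(P, B). P \<union> B) ` (Pow old \<times> W))"
    by (intro card_mono finite_imageI finite_cartesian_product) auto
  also have "\<dots> \<le> 2^n * card W"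
    using card_image_le[of "Pow old \<times> W" "\<lambda>(P, B). P \<union> B"] finW
    by (simp add: card_cartesian_product card_Pow)
  also have "card W \<le> lmax * ((m - n) choose (lmax - 1))"
  proof -
    have "W = (\<Union>i<lmax. {B. B \<subseteq> new \<and> card B = i})" by (auto simp: W_def)
    then have "card W \<le> (\<Sum>i<lmax. (m - n) choose i)"
      using card_UN_le[of "{..<lmax}" "\<lambda>i. {B. B \<subseteq> new \<and> card B = i}"] by (simp add: n_subsets)
    also have "\<dots> \<le> (\<Sum>i<lmax. (m - n) choose (lmax - 1))"
    proof (rule sum_mono)
      fix i assume "i \<in> {..<lmax}"
      moreover have "2 * (lmax - 1) \<le> m - n" using double_lmax_le by simp
      ultimately show "(m - n) choose i \<le> (m - n) choose (lmax - 1)" by (intro binomial_mono) auto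
    qed
    finally show ?thesis by simp
  qed
  finally show ?thesis by simp
qed

lemma card_top_level:
  "card {A\<in>F. card (A \<inter> new) = lmax}
     \<le> card heavy_traces * ((m - n) choose lmax) + 2^n * (lmax * ((m - n - 1) choose (lmax - 1)))"
proof -
  define K where "K = ksubsets old (n - k + 1)"
  define D where "D = lmax * ((m - n - 1) choose (lmax - 1))"
  have finK: "finite K" unfolding K_def by (simp add: finite_ksubsets)
  have heavy_K: "heavy_traces \<subseteq> K" by (auto simp: K_def heavy_traces_def)
  have "{A\<in>F. card (A \<inter> new) = lmax} \<subseteq> (\<Union>S\<in>K. top_fibre S)"
  proof
    fix A assume "A \<in> {A\<in>F. card (A \<inter> new) = lmax}"
    then have A: "A \<in> F" "card (A \<inter> new) = lmax" by auto
    have "card (A \<inter> old) = n - k + 1" using family_memberD(3)[OF A(1)] A(2) lmax_facts by linarith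
    then have "A \<inter> old \<in> K" by (auto simp: K_def ksubsets_def)
    moreover have "A \<in> top_fibre (A \<inter> old)" using A by (simp add: top_fibre_def)
    ultimately show "A \<in> (\<Union>S\<in>K. top_fibre S)" by blast
  qed
  then have "card {A\<in>F. card (A \<inter> new) = lmax} \<le> card (\<Union>S\<in>K. top_fibre S)"
    using finK finite_family by (intro card_mono) (auto simp: top_fibre_def)
  also have "\<dots> \<le> (\<Sum>S\<in>K. card (top_fibre S))" by (rule card_UN_le[OF finK])
  also have "\<dots> = (\<Sum>S\<in>K - heavy_traces. card (top_fibre S)) + (\<Sum>S\<in>heavy_traces. card (top_fibre S))"
    using heavy_K finK by (intro sum.subset_diff)
  also have "(\<Sum>S\<in>heavy_traces. card (top_fibre S)) \<le> card heavy_traces * ((m - n) choose lmax)"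
    using sum_mono[of heavy_traces "\<lambda>S. card (top_fibre S)" "\<lambda>_. (m - n) choose lmax"]
      card_top_fibre_le by simp
  also have "(\<Sum>S\<in>K - heavy_traces. card (top_fibre S)) \<le> card (K - heavy_traces) * D"
    using sum_bounded_above[of "K - heavy_traces" "\<lambda>S. card (top_fibre S)" D]
    by (auto simp: K_def heavy_traces_def D_def not_less mult.commute)
  also have "card (K - heavy_traces) * D \<le> 2^n * D"
  proof -
    have "card (K - heavy_traces) \<le> card K" using finK by (intro card_mono) auto
    also have "card K = n choose (n - k + 1)" by (simp add: K_def ksubsets_def n_subsets)
    also have "\<dots> \<le> 2^n" by (rule binomial_le_pow2)
    finally show ?thesis by simp
  qed
  finally show ?thesis unfolding D_def by simp
qed

lemma top_term_le_h: "((n - 1) choose (n - k)) * ((m - n) choose lmax) \<le> h m n k"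
proof -
  have "((n - 1) choose (n - k)) * ((m - n) choose lmax)
      = ((n - 1) choose (k - lmax - 1)) * ((m - n) choose lmax)"
    using lmax_facts by simp
  also have "\<dots> \<le> (\<Sum>i=1..lmax. ((n - 1) choose (k - i - 1)) * ((m - n) choose i))"
    using lmax_facts by (intro member_le_sum) auto
  finally show ?thesis unfolding h_def by simp
qed

lemma card_family_less_h_if_few_heavy:
  assumes few: "card heavy_traces < (n - 1) choose (n - k)"
  shows "card F < h m n k"
proof -
  define Ns where "Ns = (m - n) choose lmax"
  define X where "X = 2^n * (lmax * ((m - n) choose (lmax - 1)))"
  have "2 * X < Ns"
    using binomial_pred_dominated[of lmax "2 * 2^n" "m - n"] lmax_facts large
    unfolding X_def Ns_def by (simp add: ac_simps)
  have "(m - n - 1) choose (lmax - 1) \<le> (m - n) choose (lmax - 1)"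
    by (rule binomial_right_mono) simp
  then have "2^n * (lmax * ((m - n - 1) choose (lmax - 1))) \<le> X" unfolding X_def by simp
  then have top: "card {A\<in>F. card (A \<inter> new) = lmax} \<le> card heavy_traces * Ns + X"
    using card_top_level unfolding Ns_def by linarith
  have "F \<subseteq> {A\<in>F. card (A \<inter> new) < lmax} \<union> {A\<in>F. card (A \<inter> new) = lmax}"
    using level_le_lmax by (auto simp: le_less)
  then have "card F \<le> card ({A\<in>F. card (A \<inter> new) < lmax} \<union> {A\<in>F. card (A \<inter> new) = lmax})"
    using finite_family by (intro card_mono) auto
  also have "\<dots> \<le> card {A\<in>F. card (A \<inter> new) < lmax} + card {A\<in>F. card (A \<inter> new) = lmax}"
    by (rule card_Un_le)
  finally have "card F < card heavy_traces * Ns + Ns"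
    using top card_low_levels \<open>2 * X < Ns\<close> unfolding X_def by linarith
  also have "\<dots> \<le> ((n - 1) choose (n - k)) * Ns"
    using few mult_right_mono[of "Suc (card heavy_traces)" "(n - 1) choose (n - k)" Ns] by simp
  also have "\<dots> \<le> h m n k" unfolding Ns_def by (rule top_term_le_h)
  finally show ?thesis .
qed

theorem card_family_le_h:
  "card F \<le> h m n k \<and> (card F = h m n k \<longrightarrow> (\<exists>t\<in>old. F = H m n k t))"
proof -
  have ekr: "n - k + 1 \<ge> 1" "2 * (n - k + 1) + 1 \<le> n" "card old = n"
    "heavy_traces \<subseteq> ksubsets old (n - k + 1)"
    using lmax_facts by (auto simp: heavy_traces_def)
  have "card heavy_traces \<le> (n - 1) choose (n - k)"
    using erdos_ko_rado[of old n "n - k + 1" heavy_traces] ekr intersecting_heavy_traces by simp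
  then consider "card heavy_traces < (n - 1) choose (n - k)"
    | "card heavy_traces = (n - 1) choose (n - k)" by linarith
  then show ?thesis
  proof cases
    case 1
    then show ?thesis using card_family_less_h_if_few_heavy by simp
  next
    case 2
    then obtain t where t: "t \<in> old" "heavy_traces = star old (n - k + 1) t"
      using erdos_ko_rado_unique[of old n "n - k + 1" heavy_traces] ekr intersecting_heavy_traces
      by auto
    have sub: "F \<subseteq> H m n k t" using family_subset_H[OF t] .
    have fin: "finite (H m n k t)"
      using mnk_intersecting_H[OF t(1)] finite_ksubsets[of "{1..m}" k]
      unfolding mnk_intersecting_def by (blast intro: rev_finite_subset)
    have "card F \<le> card (H m n k t)" using card_mono[OF fin sub] .
    moreover have "card F = card (H m n k t) \<Longrightarrow> F = H m n k t" using card_subset_eq[OF fin sub] .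
    ultimately show ?thesis using card_H[OF t(1)] t(1) by auto
  qed
qed

end

context large_extension
begin

lemma large_family_if_mnk_intersecting:
  "mnk_intersecting m n k F \<Longrightarrow> large_family n k m F"
  by (intro large_family.intro large_extension_axioms) (simp add: large_family_axioms_def)

lemma alpha_eq_h: "alpha m n k = h m n k"
  unfolding alpha_def
proof (rule Max_eqI)
  have "{F. mnk_intersecting m n k F} \<subseteq> Pow (ksubsets {1..m} k)"
    by (auto simp: mnk_intersecting_def)
  moreover have "finite (Pow (ksubsets {1..m} k))" by (simp add: finite_ksubsets)
  ultimately show "finite (card ` {F. mnk_intersecting m n k F})"
    by (blast intro: finite_imageI finite_subset)
  show "c \<le> h m n k" if c: "c \<in> card ` {F. mnk_intersecting m n k F}" for c
  proof -
    obtain F where "mnk_intersecting m n k F" "c = card F" using c by blast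
    then show ?thesis
      using large_family.card_family_le_h[OF large_family_if_mnk_intersecting] by blast
  qed
  have "1 \<in> old" using k_le_n n_less_2k by simp
  then show "h m n k \<in> card ` {F. mnk_intersecting m n k F}"
    using mnk_intersecting_H card_H by (metis image_eqI mem_Collect_eq)
qed

lemma maximum_family_eq_H:
  assumes "mnk_intersecting m n k F" "card F = alpha m n k"
  shows "\<exists>t\<in>old. F = H m n k t"
  using large_family.card_family_le_h[OF large_family_if_mnk_intersecting[OF assms(1)]]
    assms(2) alpha_eq_h by simp

end

theorem theorem14:
  fixes n k :: nat
  assumes "0 < k" and "k \<le> n" and "n + 3 < 2 * k"
  shows "\<exists>M. \<forall>m\<ge>M. alpha m n k = h m n k \<and>
           (\<forall>F. mnk_intersecting m n k F \<and> card F = alpha m n k \<longrightarrow>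
                (\<exists>t\<in>{1..n}. F = H m n k t))"
proof (intro exI allI impI)
  fix m assume "n + 2 * 2^n * (2*k - n - 1) * (2*k - n - 1) + (2*k - n - 1) \<le> m"
  then interpret large_extension n k m
    using assms by unfold_locales auto
  show "alpha m n k = h m n k \<and>
      (\<forall>F. mnk_intersecting m n k F \<and> card F = alpha m n k \<longrightarrow> (\<exists>t\<in>{1..n}. F = H m n k t))"
    using alpha_eq_h maximum_family_eq_H by blast
qed

end
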